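(* Let $n\ge 1$, $i\in\{1,\ldots,n-1\}$, and let $C$ be an $s_i$-stable set of transpositions in $S_n$ (i.e. $s_i\in C$ and $s_iCs_i=C$). Then $\partial_i$ maps $H_C$ to $H_C$, and both the kernel and the image of $\partial_i:H_C\to H_C$ are equal to $H_C^{*s_i}=\{f\in H_C\mid f*s_i=f\}$.
   Context: Let $S_n$ be the symmetric group on $\{1,\ldots,n\}$ with $(vw)(j)=v(w(j))$, and $s_i=(i\leftrightarrow i+1)$. Let $H=\mathrm{Fun}(S_n,\mathbb{C}[t_1,\ldots,t_n])$ with pointwise operations. The star action is $(f*w)(v)=f(vw^{-1})$. Let $x_i\in H$ be the function $v\mapsto t_{v(i)}$. For a transposition $\tau=(i\leftrightarrow k)$, $f\in H$ satisfies condition $\tau$ if $f-f*\tau=(x_i-x_k)g$ for some $g\in H$; these form a subring $H_\tau$, and for a set $C$ of transpositions $H_C=\bigcap_{\tau\in C}H_\tau$. For $f\in H_{s_i}$, $\partial_i(f)$ is the unique $g\in H$ with $f-f*s_i=(x_i-x_{i+1})g$. *)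

theory Defs
  imports "HOL-Combinatorics.Combinatorics" "HOL-Library.Poly_Mapping"
begin

text \<open>Polynomial ring C[t_1,...,t_n] (all variables t_j, j : nat; only j in 1..n are used):
  finitely supported maps from monomials (exponent vectors) to coefficients.\<close>
type_synonym mpoly = "(nat \<Rightarrow>\<^sub>0 nat) \<Rightarrow>\<^sub>0 complex"

definition tvar :: "nat \<Rightarrow> mpoly" where
  "tvar j = Poly_Mapping.single (Poly_Mapping.single j 1) 1"

text \<open>The symmetric group S_n on {1..n}; composition (v w)(j) = v (w j) is v o w.\<close>
definition Sn :: "nat \<Rightarrow> (nat \<Rightarrow> nat) set" where
  "Sn n = {v. v permutes {1..n}}"

text \<open>H = Fun(S_n, C[t]): functions on permutations, extensionally zero off S_n.
  Values lie in C[t_1,...,t_n] (only variables 1..n occur). Ring operations are pointwise.\<close>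
definition Hn :: "nat \<Rightarrow> ((nat \<Rightarrow> nat) \<Rightarrow> mpoly) set" where
  "Hn n = {f. (\<forall>v. v \<notin> Sn n \<longrightarrow> f v = 0) \<and>
     (\<forall>v. \<forall>m \<in> Poly_Mapping.keys (f v). Poly_Mapping.keys m \<subseteq> {1..n})}"

definition star :: "((nat \<Rightarrow> nat) \<Rightarrow> mpoly) \<Rightarrow> (nat \<Rightarrow> nat) \<Rightarrow> ((nat \<Rightarrow> nat) \<Rightarrow> mpoly)" where
  "star f w = (\<lambda>v. f (v \<circ> inv w))"

definition xfun :: "nat \<Rightarrow> nat \<Rightarrow> (nat \<Rightarrow> nat) \<Rightarrow> mpoly" where
  "xfun n i = (\<lambda>v. if v \<in> Sn n then tvar (v i) else 0)"

definition simple :: "nat \<Rightarrow> nat \<Rightarrow> nat" where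
  "simple i = transpose i (Suc i)"

definition transpositions :: "nat \<Rightarrow> (nat \<Rightarrow> nat) set" where
  "transpositions n = {transpose a b | a b. a \<in> {1..n} \<and> b \<in> {1..n} \<and> a \<noteq> b}"

definition Htau :: "nat \<Rightarrow> (nat \<Rightarrow> nat) \<Rightarrow> ((nat \<Rightarrow> nat) \<Rightarrow> mpoly) set" where
  "Htau n \<tau> = {f \<in> Hn n. \<exists>i k. i \<noteq> k \<and> \<tau> = transpose i k \<and>
      (\<exists>g \<in> Hn n. \<forall>v. f v - star f \<tau> v = (xfun n i v - xfun n k v) * g v)}"

definition HC :: "nat \<Rightarrow> (nat \<Rightarrow> nat) set \<Rightarrow> ((nat \<Rightarrow> nat) \<Rightarrow> mpoly) set" where
  "HC n C = {f \<in> Hn n. \<forall>\<tau> \<in> C. f \<in> Htau n \<tau>}"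

definition ddiff :: "nat \<Rightarrow> nat \<Rightarrow> ((nat \<Rightarrow> nat) \<Rightarrow> mpoly) \<Rightarrow> ((nat \<Rightarrow> nat) \<Rightarrow> mpoly)" where
  "ddiff n i f = (THE g. g \<in> Hn n \<and>
      (\<forall>v. f v - star f (simple i) v = (xfun n i v - xfun n (Suc i) v) * g v))"

end

theory Submission
  imports Defs
begin

text \<open>
  Write \<sigma>_xy (\<open>poly_subst x y\<close>) for the ring endomorphism of \<complex>[t] substituting t_y for t_x.
  Since p - \<sigma>_xy p is always a multiple of t_x - t_y, a polynomial is a multiple of
  t_x - t_y iff \<sigma>_xy kills it. Hence f satisfies the condition of (a b) iff
  \<sigma>(f v - f (v (a b))) = 0 for every v, where \<sigma> substitutes t_(v b) for t_(v a).

  Let \<tau> = (a b) \<in> C be different from s_i. Applying this \<sigma> to the defining identities of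
  \<partial>_i f at v and at v \<tau>, and using that f satisfies both \<tau> and s_i \<tau> s_i (this is where the
  s_i-stability of C enters), gives \<sigma>(t_(v i) - t_(v (i+1))) \<sigma>(\<partial>_i f v - \<partial>_i f (v \<tau>)) = 0,
  and the first factor is nonzero because \<tau> \<noteq> s_i. As for kernel and image: \<partial>_i f = 0 iff
  f = f * s_i; every \<partial>_i f is s_i-invariant; and an s_i-invariant g equals \<partial>_i (x_i g), where
  x_i g \<in> H_C because H_C is a ring containing x_i.
\<close>

section \<open>Substituting one variable for another\<close>

definition monom_subst :: "nat \<Rightarrow> nat \<Rightarrow> (nat \<Rightarrow>\<^sub>0 nat) \<Rightarrow> (nat \<Rightarrow>\<^sub>0 nat)" where
  "monom_subst x y m =
     Poly_Mapping.update x 0 m + Poly_Mapping.single y (Poly_Mapping.lookup m x)"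

definition poly_subst :: "nat \<Rightarrow> nat \<Rightarrow> mpoly \<Rightarrow> mpoly" where
  "poly_subst x y p = (\<Sum>m\<in>Poly_Mapping.keys p.
     Poly_Mapping.single (monom_subst x y m) (Poly_Mapping.lookup p m))"

lemma lookup_monom_subst:
  "Poly_Mapping.lookup (monom_subst x y m) j =
     (if j = x then 0 else Poly_Mapping.lookup m j) + (if j = y then Poly_Mapping.lookup m x else 0)"
  by (simp add: monom_subst_def lookup_add lookup_update lookup_single when_def)

lemma monom_subst_add: "monom_subst x y (m + m') = monom_subst x y m + monom_subst x y m'"
  by (rule poly_mapping_eqI) (simp add: lookup_monom_subst lookup_add)

lemma monom_subst_single:
  "monom_subst x y (Poly_Mapping.single z k) = Poly_Mapping.single (if z = x then y else z) k"
  by (rule poly_mapping_eqI) (auto simp: lookup_monom_subst lookup_single when_def)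

lemma poly_subst_eq_sum:
  assumes "finite S" "Poly_Mapping.keys p \<subseteq> S"
  shows "poly_subst x y p =
    (\<Sum>m\<in>S. Poly_Mapping.single (monom_subst x y m) (Poly_Mapping.lookup p m))"
  unfolding poly_subst_def
  by (rule sum.mono_neutral_left) (use assms in \<open>auto simp: in_keys_iff\<close>)

lemma poly_subst_add [simp]: "poly_subst x y (p + q) = poly_subst x y p + poly_subst x y q"
proof -
  let ?S = "Poly_Mapping.keys p \<union> Poly_Mapping.keys q"
  show ?thesis
    by (simp add: poly_subst_eq_sum[OF _ keys_add] poly_subst_eq_sum[of ?S p]
        poly_subst_eq_sum[of ?S q] lookup_add single_add sum.distrib)
qed

lemma poly_subst_0 [simp]: "poly_subst x y 0 = 0"
  by (simp add: poly_subst_def)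

lemma poly_subst_uminus [simp]: "poly_subst x y (- p) = - poly_subst x y p"
  using poly_subst_add[of x y p "- p"] by (simp add: add_eq_0_iff)

lemma poly_subst_diff [simp]: "poly_subst x y (p - q) = poly_subst x y p - poly_subst x y q"
  using poly_subst_add[of x y p "- q"] by simp

lemma poly_subst_sum: "poly_subst x y (sum f A) = (\<Sum>a\<in>A. poly_subst x y (f a))"
  by (induction A rule: infinite_finite_induct) auto

lemma poly_subst_single [simp]:
  "poly_subst x y (Poly_Mapping.single m c) = Poly_Mapping.single (monom_subst x y m) c"
  by (simp add: poly_subst_def)

lemma sum_single_lookup:
  "(\<Sum>m\<in>Poly_Mapping.keys p. Poly_Mapping.single m (Poly_Mapping.lookup p m)) = p"
  by (rule poly_mapping_eqI) (simp add: lookup_sum lookup_single when_def in_keys_iff)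

lemma poly_subst_mult [simp]: "poly_subst x y (p * q) = poly_subst x y p * poly_subst x y q"
proof -
  let ?A = "Poly_Mapping.keys p" and ?B = "Poly_Mapping.keys q"
  let ?c = "\<lambda>m m'. Poly_Mapping.lookup p m * Poly_Mapping.lookup q m'"
  have "p * q = (\<Sum>m\<in>?A. Poly_Mapping.single m (Poly_Mapping.lookup p m)) *
      (\<Sum>m'\<in>?B. Poly_Mapping.single m' (Poly_Mapping.lookup q m'))"
    by (simp only: sum_single_lookup)
  also have "\<dots> = (\<Sum>m\<in>?A. \<Sum>m'\<in>?B. Poly_Mapping.single (m + m') (?c m m'))"
    by (simp add: sum_product mult_single)
  finally have "p * q = (\<Sum>m\<in>?A. \<Sum>m'\<in>?B. Poly_Mapping.single (m + m') (?c m m'))" .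
  then have "poly_subst x y (p * q) =
      (\<Sum>m\<in>?A. \<Sum>m'\<in>?B. Poly_Mapping.single (monom_subst x y m + monom_subst x y m') (?c m m'))"
    by (simp add: poly_subst_sum monom_subst_add)
  also have "\<dots> = poly_subst x y p * poly_subst x y q"
    by (simp add: poly_subst_def sum_product mult_single)
  finally show ?thesis .
qed

lemma poly_subst_tvar: "poly_subst x y (tvar z) = tvar (if z = x then y else z)"
  by (simp add: tvar_def monom_subst_single)

lemma tvar_eq_iff: "tvar a = tvar b \<longleftrightarrow> a = b"
proof
  assume "tvar a = tvar b"
  then have "Poly_Mapping.lookup (tvar a) (Poly_Mapping.single a 1) =
      Poly_Mapping.lookup (tvar b) (Poly_Mapping.single a 1)"
    by simp
  then have "Poly_Mapping.single b (1::nat) = Poly_Mapping.single a 1"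
    by (simp add: tvar_def lookup_single when_def split: if_splits)
  then have "Poly_Mapping.lookup (Poly_Mapping.single b (1::nat)) a \<noteq> 0"
    by simp
  then show "a = b"
    by (simp add: lookup_single when_def split: if_splits)
qed simp

lemma poly_subst_tvar_diff_eq_0_iff:
  assumes "x \<noteq> y" "c \<noteq> d"
  shows "poly_subst x y (tvar c - tvar d) = 0 \<longleftrightarrow> (c = x \<and> d = y) \<or> (c = y \<and> d = x)"
  using assms by (auto simp: poly_subst_tvar tvar_eq_iff)

definition vars_within :: "nat set \<Rightarrow> mpoly \<Rightarrow> bool" where
  "vars_within V p \<longleftrightarrow> (\<forall>m\<in>Poly_Mapping.keys p. Poly_Mapping.keys m \<subseteq> V)"

lemma vars_within_0 [simp]: "vars_within V 0"
  by (simp add: vars_within_def)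

lemma vars_within_add: "vars_within V p \<Longrightarrow> vars_within V q \<Longrightarrow> vars_within V (p + q)"
  using keys_add[of p q] by (auto simp: vars_within_def)

lemma vars_within_uminus: "vars_within V p \<Longrightarrow> vars_within V (- p)"
  by (simp add: vars_within_def)

lemma vars_within_diff: "vars_within V p \<Longrightarrow> vars_within V q \<Longrightarrow> vars_within V (p - q)"
  using vars_within_add[of V p "- q"] vars_within_uminus[of V q] by simp

lemma vars_within_mult:
  assumes "vars_within V p" "vars_within V q"
  shows "vars_within V (p * q)"
  unfolding vars_within_def
proof
  fix m
  assume "m \<in> Poly_Mapping.keys (p * q)"
  then have "m \<in> {a + b | a b. a \<in> Poly_Mapping.keys p \<and> b \<in> Poly_Mapping.keys q}"
    using keys_mult by blast
  then obtain a b where "a \<in> Poly_Mapping.keys p" "b \<in> Poly_Mapping.keys q" "m = a + b"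
    by blast
  then show "Poly_Mapping.keys m \<subseteq> V"
    using assms keys_add[of a b] unfolding vars_within_def by blast
qed

lemma vars_within_single: "Poly_Mapping.keys m \<subseteq> V \<Longrightarrow> vars_within V (Poly_Mapping.single m c)"
  by (simp add: vars_within_def)

lemma vars_within_tvar: "z \<in> V \<Longrightarrow> vars_within V (tvar z)"
  by (simp add: vars_within_def tvar_def)

lemma vars_within_sum: "(\<And>a. a \<in> A \<Longrightarrow> vars_within V (f a)) \<Longrightarrow> vars_within V (sum f A)"
  by (induction A rule: infinite_finite_induct) (auto intro: vars_within_add)

lemma monom_minus_poly_subst_factor:
  assumes "x \<in> V" "y \<in> V" "Poly_Mapping.keys m \<subseteq> V"
  shows "\<exists>q. vars_within V q \<and>
    Poly_Mapping.single m c - poly_subst x y (Poly_Mapping.single m c) = (tvar x - tvar y) * q"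
  using assms(3)
proof (induction "Poly_Mapping.lookup m x" arbitrary: m)
  case 0
  then have "monom_subst x y m = m"
    by (intro poly_mapping_eqI) (auto simp: lookup_monom_subst)
  then show ?case by (intro exI[of _ 0]) simp
next
  case (Suc k)
  define m' where "m' = Poly_Mapping.update x k m"
  let ?u = "Poly_Mapping.single m' c"
  have "k = Poly_Mapping.lookup m' x" by (simp add: m'_def lookup_update)
  moreover have keys': "Poly_Mapping.keys m' \<subseteq> V"
    using Suc.prems assms(1) by (auto simp: m'_def keys_update)
  ultimately obtain q' where q': "vars_within V q'" "?u - poly_subst x y ?u = (tvar x - tvar y) * q'"
    using Suc.hyps(1) by blast
  have "m = Poly_Mapping.single x 1 + m'"
    using Suc.hyps(2)
    by (intro poly_mapping_eqI) (auto simp: m'_def lookup_add lookup_update lookup_single when_def)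
  then have "Poly_Mapping.single m c = tvar x * ?u"
    by (simp add: tvar_def mult_single)
  then have "Poly_Mapping.single m c - poly_subst x y (Poly_Mapping.single m c)
      = (tvar x - tvar y) * ?u + tvar y * (?u - poly_subst x y ?u)"
    by (simp add: poly_subst_tvar algebra_simps)
  also have "\<dots> = (tvar x - tvar y) * ?u + tvar y * ((tvar x - tvar y) * q')"
    by (simp only: q'(2))
  also have "\<dots> = (tvar x - tvar y) * (?u + tvar y * q')"
    by (simp add: algebra_simps)
  finally show ?case
    using q'(1) keys' assms(2)
    by (intro exI[of _ "?u + tvar y * q'"]) (auto intro!: vars_within_add vars_within_mult
        vars_within_single vars_within_tvar)
qed

lemma minus_poly_subst_factor:
  assumes "x \<in> V" "y \<in> V" "vars_within V p"
  obtains q where "vars_within V q" "p - poly_subst x y p = (tvar x - tvar y) * q"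
proof -
  let ?u = "\<lambda>m. Poly_Mapping.single m (Poly_Mapping.lookup p m)"
  have "\<exists>q. vars_within V q \<and> ?u m - poly_subst x y (?u m) = (tvar x - tvar y) * q"
    if "m \<in> Poly_Mapping.keys p" for m
  proof -
    have "Poly_Mapping.keys m \<subseteq> V" using assms(3) that by (simp add: vars_within_def)
    then show ?thesis by (rule monom_minus_poly_subst_factor[OF assms(1,2)])
  qed
  then have "\<exists>Q. \<forall>m\<in>Poly_Mapping.keys p.
      vars_within V (Q m) \<and> ?u m - poly_subst x y (?u m) = (tvar x - tvar y) * Q m"
    by (intro bchoice) blast
  then obtain Q where Q: "\<forall>m\<in>Poly_Mapping.keys p.
      vars_within V (Q m) \<and> ?u m - poly_subst x y (?u m) = (tvar x - tvar y) * Q m"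
    by blast
  have "p - poly_subst x y p =
      (\<Sum>m\<in>Poly_Mapping.keys p. ?u m) - poly_subst x y (\<Sum>m\<in>Poly_Mapping.keys p. ?u m)"
    by (simp only: sum_single_lookup)
  also have "\<dots> = (\<Sum>m\<in>Poly_Mapping.keys p. ?u m - poly_subst x y (?u m))"
    by (simp only: poly_subst_sum sum_subtractf)
  also have "\<dots> = (tvar x - tvar y) * (\<Sum>m\<in>Poly_Mapping.keys p. Q m)"
    unfolding sum_distrib_left using Q by (intro sum.cong) auto
  finally show ?thesis
    using Q by (intro that[of "\<Sum>m\<in>Poly_Mapping.keys p. Q m"]) (auto intro: vars_within_sum)
qed

lemma tvar_diff_factor_iff_poly_subst_eq_0:
  assumes "x \<in> V" "y \<in> V" "vars_within V p"
  shows "(\<exists>q. vars_within V q \<and> p = (tvar x - tvar y) * q) \<longleftrightarrow> poly_subst x y p = 0"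
proof
  assume "poly_subst x y p = 0"
  moreover obtain q where "vars_within V q" "p - poly_subst x y p = (tvar x - tvar y) * q"
    using minus_poly_subst_factor[OF assms] .
  ultimately show "\<exists>q. vars_within V q \<and> p = (tvar x - tvar y) * q"
    by auto
next
  assume "\<exists>q. vars_within V q \<and> p = (tvar x - tvar y) * q"
  then show "poly_subst x y p = 0"
    by (auto simp: poly_subst_tvar)
qed

section \<open>The condition of a transposition\<close>

lemma Sn_compose: "v \<in> Sn n \<Longrightarrow> w \<in> Sn n \<Longrightarrow> v \<circ> w \<in> Sn n"
  by (simp add: Sn_def permutes_compose)

lemma transpose_in_Sn: "a \<in> {1..n} \<Longrightarrow> b \<in> {1..n} \<Longrightarrow> transpose a b \<in> Sn n"
  by (simp add: Sn_def permutes_swap_id)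

lemma comp_transpose_in_Sn_iff:
  assumes "a \<in> {1..n}" "b \<in> {1..n}"
  shows "v \<circ> transpose a b \<in> Sn n \<longleftrightarrow> v \<in> Sn n"
  by (metis assms Sn_compose transpose_in_Sn comp_assoc comp_id transpose_comp_involutory)

lemma comp_simple_in_Sn_iff: "1 \<le> i \<Longrightarrow> Suc i \<le> n \<Longrightarrow> v \<circ> simple i \<in> Sn n \<longleftrightarrow> v \<in> Sn n"
  by (simp add: simple_def comp_transpose_in_Sn_iff)

lemma Sn_apply_in: "v \<in> Sn n \<Longrightarrow> j \<in> {1..n} \<Longrightarrow> v j \<in> {1..n}"
  unfolding Sn_def by (metis mem_Collect_eq permutes_in_image)

lemma Sn_apply_eq_iff [simp]: "v \<in> Sn n \<Longrightarrow> v a = v b \<longleftrightarrow> a = b"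
  by (simp add: Sn_def permutes_inj inj_eq)

lemma simple_apply [simp]: "simple i i = Suc i" "simple i (Suc i) = i"
  by (simp_all add: simple_def)

lemma transpose_conj:
  "transpose c d \<circ> transpose a b \<circ> transpose c d = transpose (transpose c d a) (transpose c d b)"
proof
  fix x
  have "transpose (transpose c d a) (transpose c d b) (transpose c d (transpose c d x)) =
      transpose c d (transpose a b (transpose c d x))"
    by (subst transpose_apply_commute[of "transpose c d"]) simp_all
  then show "(transpose c d \<circ> transpose a b \<circ> transpose c d) x =
      transpose (transpose c d a) (transpose c d b) x"
    by simp
qed

lemma transpose_eq_transpose_iff:
  assumes "a \<noteq> b"
  shows "transpose a b = transpose c d \<longleftrightarrow> (c = a \<and> d = b) \<or> (c = b \<and> d = a)"
proof
  assume "transpose a b = transpose c d"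
  then have "transpose c d a = b" by (metis transpose_apply_first)
  with assms show "(c = a \<and> d = b) \<or> (c = b \<and> d = a)" by (auto simp: transpose_eq_iff)
qed (auto simp: transpose_commute)

lemma transpositionsE:
  assumes "\<tau> \<in> transpositions n"
  obtains a b where "a \<in> {1..n}" "b \<in> {1..n}" "a \<noteq> b" "\<tau> = transpose a b"
  using assms unfolding transpositions_def by blast

lemma star_transpose: "star f (transpose a b) v = f (v \<circ> transpose a b)"
  by (simp add: star_def)

lemma star_simple: "star f (simple i) v = f (v \<circ> simple i)"
  by (simp add: simple_def star_transpose)

lemma Hn_iff: "f \<in> Hn n \<longleftrightarrow> (\<forall>v. v \<notin> Sn n \<longrightarrow> f v = 0) \<and> (\<forall>v. vars_within {1..n} (f v))"
  by (simp add: Hn_def vars_within_def)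

lemma Htau_imp_Hn: "f \<in> Htau n \<tau> \<Longrightarrow> f \<in> Hn n"
  by (simp add: Htau_def)

lemma poly_subst_tvar_comp_transpose:
  "poly_subst (v a) (v b) (tvar (v (transpose a b j))) = poly_subst (v a) (v b) (tvar (v j))"
  by (simp add: poly_subst_tvar transpose_def)

lemma Htau_transpose_iff:
  assumes ab: "a \<in> {1..n}" "b \<in> {1..n}" "a \<noteq> b" and f: "f \<in> Hn n"
  shows "f \<in> Htau n (transpose a b) \<longleftrightarrow>
    (\<forall>v\<in>Sn n. poly_subst (v a) (v b) (f v - f (v \<circ> transpose a b)) = 0)"
proof
  assume "f \<in> Htau n (transpose a b)"
  then obtain c d g where cd: "transpose a b = transpose c d"
    and eq: "\<And>v. f v - star f (transpose a b) v = (xfun n c v - xfun n d v) * g v"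
    unfolding Htau_def by blast
  show "\<forall>v\<in>Sn n. poly_subst (v a) (v b) (f v - f (v \<circ> transpose a b)) = 0"
  proof
    fix v assume v: "v \<in> Sn n"
    have "f v - f (v \<circ> transpose a b) = (tvar (v c) - tvar (v d)) * g v"
      using eq[of v] v by (simp add: star_transpose xfun_def)
    with cd ab(3) show "poly_subst (v a) (v b) (f v - f (v \<circ> transpose a b)) = 0"
      by (auto simp: transpose_eq_transpose_iff poly_subst_tvar)
  qed
next
  assume subst_eq_0: "\<forall>v\<in>Sn n. poly_subst (v a) (v b) (f v - f (v \<circ> transpose a b)) = 0"
  have ex: "\<exists>q. vars_within {1..n} q \<and> (v \<notin> Sn n \<longrightarrow> q = 0) \<and>
      (v \<in> Sn n \<longrightarrow> f v - f (v \<circ> transpose a b) = (tvar (v a) - tvar (v b)) * q)" for v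
  proof (cases "v \<in> Sn n")
    case True
    have "vars_within {1..n} (f v - f (v \<circ> transpose a b))"
      using f by (simp add: Hn_iff vars_within_diff)
    moreover note Sn_apply_in[OF True ab(1)] Sn_apply_in[OF True ab(2)]
    ultimately show ?thesis
      using tvar_diff_factor_iff_poly_subst_eq_0 subst_eq_0 True by blast
  qed auto
  have "\<exists>g. \<forall>v. vars_within {1..n} (g v) \<and> (v \<notin> Sn n \<longrightarrow> g v = 0) \<and>
      (v \<in> Sn n \<longrightarrow> f v - f (v \<circ> transpose a b) = (tvar (v a) - tvar (v b)) * g v)"
    by (rule choice) (use ex in blast)
  then obtain g where g: "\<And>v. vars_within {1..n} (g v) \<and> (v \<notin> Sn n \<longrightarrow> g v = 0) \<and>
      (v \<in> Sn n \<longrightarrow> f v - f (v \<circ> transpose a b) = (tvar (v a) - tvar (v b)) * g v)"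
    by blast
  have "g \<in> Hn n" using g by (simp add: Hn_iff)
  moreover have "f v - star f (transpose a b) v = (xfun n a v - xfun n b v) * g v" for v
    using g[of v] f comp_transpose_in_Sn_iff[OF ab(1,2), of v]
    by (auto simp: star_transpose xfun_def Hn_iff)
  ultimately show "f \<in> Htau n (transpose a b)"
    using ab(3) f unfolding Htau_def by blast
qed

section \<open>Divided differences\<close>

definition is_ddiff ::
    "nat \<Rightarrow> nat \<Rightarrow> ((nat \<Rightarrow> nat) \<Rightarrow> mpoly) \<Rightarrow> ((nat \<Rightarrow> nat) \<Rightarrow> mpoly) \<Rightarrow> bool" where
  "is_ddiff n i f g \<longleftrightarrow> g \<in> Hn n \<and>
     (\<forall>v. f v - star f (simple i) v = (xfun n i v - xfun n (Suc i) v) * g v)"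

lemma is_ddiff_unique:
  assumes "is_ddiff n i f g" "is_ddiff n i f g'"
  shows "g = g'"
proof
  fix v
  show "g v = g' v"
  proof (cases "v \<in> Sn n")
    case True
    then have "xfun n i v - xfun n (Suc i) v \<noteq> 0"
      by (simp add: xfun_def tvar_eq_iff)
    moreover have "f v - star f (simple i) v = (xfun n i v - xfun n (Suc i) v) * g v"
      using assms(1) by (simp add: is_ddiff_def)
    moreover have "f v - star f (simple i) v = (xfun n i v - xfun n (Suc i) v) * g' v"
      using assms(2) by (simp add: is_ddiff_def)
    ultimately show ?thesis by simp
  next
    case False
    with assms show ?thesis by (simp add: is_ddiff_def Hn_iff)
  qed
qed

lemma ddiff_eqI: "is_ddiff n i f g \<Longrightarrow> ddiff n i f = g"
  unfolding ddiff_def is_ddiff_def[symmetric] by (blast intro: the_equality is_ddiff_unique)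

lemma is_ddiff_ddiff:
  assumes "f \<in> Htau n (simple i)"
  shows "is_ddiff n i f (ddiff n i f)"
proof -
  obtain c d g where cd: "simple i = transpose c d" and g: "g \<in> Hn n"
    and eq: "\<And>v. f v - star f (simple i) v = (xfun n c v - xfun n d v) * g v"
    using assms unfolding Htau_def by blast
  from cd have "(c = i \<and> d = Suc i) \<or> (c = Suc i \<and> d = i)"
    by (simp add: simple_def transpose_eq_transpose_iff)
  then have "is_ddiff n i f g \<or> is_ddiff n i f (\<lambda>v. - g v)"
    using g eq by (auto simp: is_ddiff_def Hn_iff vars_within_uminus algebra_simps)
  then show ?thesis by (elim disjE) (simp_all add: ddiff_eqI)
qed

lemma ddiff_in_Hn: "f \<in> Htau n (simple i) \<Longrightarrow> ddiff n i f \<in> Hn n"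
  using is_ddiff_ddiff by (simp add: is_ddiff_def)

lemma diff_comp_simple_eq_ddiff:
  assumes "f \<in> Htau n (simple i)" "v \<in> Sn n"
  shows "f v - f (v \<circ> simple i) = (tvar (v i) - tvar (v (Suc i))) * ddiff n i f v"
  using is_ddiff_ddiff[OF assms(1)] assms(2) by (simp add: is_ddiff_def xfun_def star_simple)

lemma ddiff_comp_simple:
  assumes i: "1 \<le> i" "Suc i \<le> n" and f: "f \<in> Htau n (simple i)" and v: "v \<in> Sn n"
  shows "ddiff n i f (v \<circ> simple i) = ddiff n i f v"
proof -
  have "v \<circ> simple i \<in> Sn n" using i v by (simp add: comp_simple_in_Sn_iff)
  from diff_comp_simple_eq_ddiff[OF f this]
  have "f v - f (v \<circ> simple i) = (tvar (v i) - tvar (v (Suc i))) * ddiff n i f (v \<circ> simple i)"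
    by (simp add: comp_assoc simple_def algebra_simps)
  moreover have "tvar (v i) - tvar (v (Suc i)) \<noteq> 0"
    using v by (simp add: tvar_eq_iff)
  ultimately show ?thesis
    using diff_comp_simple_eq_ddiff[OF f v] by simp
qed

lemma star_ddiff_simple:
  assumes i: "1 \<le> i" "Suc i \<le> n" and f: "f \<in> Htau n (simple i)"
  shows "star (ddiff n i f) (simple i) = ddiff n i f"
proof
  fix v
  show "star (ddiff n i f) (simple i) v = ddiff n i f v"
  proof (cases "v \<in> Sn n")
    case True
    then show ?thesis using ddiff_comp_simple[OF i f] by (simp add: star_simple)
  next
    case False
    then show ?thesis
      using ddiff_in_Hn[OF f] i by (simp add: star_simple Hn_iff comp_simple_in_Sn_iff)
  qed
qed

lemma ddiff_eq_0_iff: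
  assumes "f \<in> Htau n (simple i)"
  shows "ddiff n i f = (\<lambda>v. 0) \<longleftrightarrow> star f (simple i) = f"
proof
  assume "ddiff n i f = (\<lambda>v. 0)"
  with is_ddiff_ddiff[OF assms] show "star f (simple i) = f"
    by (simp add: is_ddiff_def fun_eq_iff)
next
  assume "star f (simple i) = f"
  then have "is_ddiff n i f (\<lambda>v. 0)" by (simp add: is_ddiff_def Hn_iff)
  then show "ddiff n i f = (\<lambda>v. 0)" by (rule ddiff_eqI)
qed

lemma poly_subst_mult_ddiff_diff_eq_0:
  assumes i: "1 \<le> i" "Suc i \<le> n" and ab: "a \<in> {1..n}" "b \<in> {1..n}" "a \<noteq> b"
    and f: "f \<in> Htau n (simple i)" "f \<in> Htau n (transpose a b)"
      "f \<in> Htau n (transpose (simple i a) (simple i b))"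
    and v: "v \<in> Sn n"
  shows "poly_subst (v a) (v b) (tvar (v i) - tvar (v (Suc i))) *
    poly_subst (v a) (v b) (ddiff n i f v - ddiff n i f (v \<circ> transpose a b)) = 0"
proof -
  let ?s = "simple i" and ?t = "transpose a b" and ?g = "ddiff n i f"
  let ?\<sigma> = "poly_subst (v a) (v b)"
  have fH: "f \<in> Hn n" using f(1) by (rule Htau_imp_Hn)
  have vt: "v \<circ> ?t \<in> Sn n" and vs: "v \<circ> ?s \<in> Sn n"
    using ab i v by (simp_all add: comp_transpose_in_Sn_iff comp_simple_in_Sn_iff)
  have s: "?s \<in> Sn n" using i by (simp add: simple_def transpose_in_Sn)
  have sab: "?s a \<in> {1..n}" "?s b \<in> {1..n}" "?s a \<noteq> ?s b"
    using Sn_apply_in[OF s ab(1)] Sn_apply_in[OF s ab(2)] s ab(3) by simp_all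
  have h1: "?\<sigma> (f v - f (v \<circ> ?t)) = 0"
    using f(2) v by (simp add: Htau_transpose_iff[OF ab fH])
  have h2: "?\<sigma> (f (v \<circ> ?s) - f (v \<circ> ?t \<circ> ?s)) = 0"
  proof -
    \<comment> \<open>the condition of s_i \<tau> s_i, read at v s_i, uses the same substitution \<sigma>\<close>
    have "v \<circ> ?s \<circ> transpose (?s a) (?s b) = v \<circ> ?t \<circ> ?s"
      by (simp add: transpose_conj[symmetric] simple_def fun_eq_iff)
    moreover have "(v \<circ> ?s) (?s a) = v a" "(v \<circ> ?s) (?s b) = v b"
      by (simp_all add: simple_def)
    moreover have "poly_subst ((v \<circ> ?s) (?s a)) ((v \<circ> ?s) (?s b))
        (f (v \<circ> ?s) - f (v \<circ> ?s \<circ> transpose (?s a) (?s b))) = 0"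
      using f(3) vs unfolding Htau_transpose_iff[OF sab fH] by blast
    ultimately show ?thesis by simp
  qed
  have "?\<sigma> (tvar (v i) - tvar (v (Suc i))) * ?\<sigma> (?g v - ?g (v \<circ> ?t))
      = ?\<sigma> (f v - f (v \<circ> ?s)) - ?\<sigma> (f (v \<circ> ?t) - f (v \<circ> ?t \<circ> ?s))"
    using diff_comp_simple_eq_ddiff[OF f(1) v] diff_comp_simple_eq_ddiff[OF f(1) vt]
    by (simp add: poly_subst_tvar_comp_transpose right_diff_distrib)
  also have "\<dots> = ?\<sigma> (f v - f (v \<circ> ?t)) - ?\<sigma> (f (v \<circ> ?s) - f (v \<circ> ?t \<circ> ?s))"
    by (simp add: algebra_simps)
  also have "\<dots> = 0"
    using h1 h2 by simp
  finally show ?thesis .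
qed

lemma ddiff_in_Htau:
  assumes i: "1 \<le> i" "Suc i \<le> n" and ab: "a \<in> {1..n}" "b \<in> {1..n}" "a \<noteq> b"
    and f: "f \<in> Htau n (simple i)" "f \<in> Htau n (transpose a b)"
      "f \<in> Htau n (transpose (simple i a) (simple i b))"
  shows "ddiff n i f \<in> Htau n (transpose a b)"
proof -
  have gH: "ddiff n i f \<in> Hn n" using f(1) by (rule ddiff_in_Hn)
  show ?thesis
  proof (cases "transpose a b = simple i")
    case True
    then show ?thesis
      unfolding Htau_transpose_iff[OF ab gH] using ddiff_comp_simple[OF i f(1)] by simp
  next
    case False
    have "poly_subst (v a) (v b) (ddiff n i f v - ddiff n i f (v \<circ> transpose a b)) = 0"
      if v: "v \<in> Sn n" for v
    proof -
      have "\<not> ((i = a \<and> Suc i = b) \<or> (i = b \<and> Suc i = a))"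
        using False by (auto simp: simple_def transpose_commute)
      then have "poly_subst (v a) (v b) (tvar (v i) - tvar (v (Suc i))) \<noteq> 0"
        using poly_subst_tvar_diff_eq_0_iff[of "v a" "v b" "v i" "v (Suc i)"] v ab(3) by simp
      then show ?thesis
        using poly_subst_mult_ddiff_diff_eq_0[OF i ab f v] by simp
    qed
    then show ?thesis by (simp add: Htau_transpose_iff[OF ab gH])
  qed
qed

lemma ddiff_in_HC:
  assumes i: "1 \<le> i" "Suc i \<le> n" and C: "C \<subseteq> transpositions n" "simple i \<in> C"
    and conj: "\<And>\<tau>. \<tau> \<in> C \<Longrightarrow> simple i \<circ> \<tau> \<circ> simple i \<in> C"
    and f: "f \<in> HC n C"
  shows "ddiff n i f \<in> HC n C"
proof -
  have fC: "f \<in> Htau n \<tau>" if "\<tau> \<in> C" for \<tau>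
    using f that by (simp add: HC_def)
  have "ddiff n i f \<in> Htau n \<tau>" if \<tau>: "\<tau> \<in> C" for \<tau>
  proof -
    have "\<tau> \<in> transpositions n" using \<tau> C(1) by blast
    then obtain a b where ab: "a \<in> {1..n}" "b \<in> {1..n}" "a \<noteq> b" and \<tau>_eq: "\<tau> = transpose a b"
      by (rule transpositionsE)
    have "simple i \<circ> \<tau> \<circ> simple i = transpose (simple i a) (simple i b)"
      unfolding \<tau>_eq simple_def by (rule transpose_conj)
    then have "f \<in> Htau n (transpose (simple i a) (simple i b))"
      using fC[OF conj[OF \<tau>]] by simp
    with fC[OF \<tau>] fC[OF C(2)] have "ddiff n i f \<in> Htau n (transpose a b)"
      unfolding \<tau>_eq by (intro ddiff_in_Htau[OF i ab])
    then show ?thesis unfolding \<tau>_eq .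
  qed
  then show ?thesis
    using ddiff_in_Hn[OF fC[OF C(2)]] by (simp add: HC_def)
qed

lemma Hn_mult: "f \<in> Hn n \<Longrightarrow> g \<in> Hn n \<Longrightarrow> (\<lambda>v. f v * g v) \<in> Hn n"
  by (simp add: Hn_iff vars_within_mult)

lemma xfun_in_Hn: "j \<in> {1..n} \<Longrightarrow> xfun n j \<in> Hn n"
  using vars_within_tvar[OF Sn_apply_in] by (auto simp: Hn_iff xfun_def)

lemma Htau_mult:
  assumes ab: "a \<in> {1..n}" "b \<in> {1..n}" "a \<noteq> b"
    and f: "f \<in> Htau n (transpose a b)" and g: "g \<in> Htau n (transpose a b)"
  shows "(\<lambda>v. f v * g v) \<in> Htau n (transpose a b)"
proof -
  have fH: "f \<in> Hn n" and gH: "g \<in> Hn n"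
    using f g by (simp_all add: Htau_imp_Hn)
  have "poly_subst (v a) (v b) (f v * g v - f (v \<circ> transpose a b) * g (v \<circ> transpose a b)) = 0"
    if v: "v \<in> Sn n" for v
  proof -
    have "poly_subst (v a) (v b) (f v) = poly_subst (v a) (v b) (f (v \<circ> transpose a b))"
      using f v by (simp add: Htau_transpose_iff[OF ab fH])
    moreover have "poly_subst (v a) (v b) (g v) = poly_subst (v a) (v b) (g (v \<circ> transpose a b))"
      using g v by (simp add: Htau_transpose_iff[OF ab gH])
    ultimately show ?thesis by simp
  qed
  then show ?thesis by (simp add: Htau_transpose_iff[OF ab Hn_mult[OF fH gH]])
qed

lemma xfun_in_Htau:
  assumes j: "j \<in> {1..n}" and ab: "a \<in> {1..n}" "b \<in> {1..n}" "a \<noteq> b"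
  shows "xfun n j \<in> Htau n (transpose a b)"
proof -
  have "poly_subst (v a) (v b) (xfun n j v - xfun n j (v \<circ> transpose a b)) = 0"
    if "v \<in> Sn n" for v
    using that ab by (simp add: xfun_def comp_transpose_in_Sn_iff poly_subst_tvar_comp_transpose)
  then show ?thesis
    using Htau_transpose_iff[OF ab xfun_in_Hn[OF j]] by blast
qed

lemma HC_mult:
  assumes C: "C \<subseteq> transpositions n" and f: "f \<in> HC n C" and g: "g \<in> HC n C"
  shows "(\<lambda>v. f v * g v) \<in> HC n C"
proof -
  have "(\<lambda>v. f v * g v) \<in> Htau n \<tau>" if "\<tau> \<in> C" for \<tau>
  proof -
    have "\<tau> \<in> transpositions n" using that C by blast
    then obtain a b where "a \<in> {1..n}" "b \<in> {1..n}" "a \<noteq> b" "\<tau> = transpose a b"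
      by (rule transpositionsE)
    with that f g show ?thesis by (simp add: HC_def Htau_mult)
  qed
  with f g show ?thesis by (simp add: HC_def Hn_mult)
qed

lemma xfun_in_HC:
  assumes C: "C \<subseteq> transpositions n" and j: "j \<in> {1..n}"
  shows "xfun n j \<in> HC n C"
proof -
  have "xfun n j \<in> Htau n \<tau>" if "\<tau> \<in> C" for \<tau>
  proof -
    have "\<tau> \<in> transpositions n" using that C by blast
    then obtain a b where "a \<in> {1..n}" "b \<in> {1..n}" "a \<noteq> b" "\<tau> = transpose a b"
      by (rule transpositionsE)
    with j show ?thesis by (simp add: xfun_in_Htau)
  qed
  with j show ?thesis by (simp add: HC_def xfun_in_Hn)
qed

lemma ddiff_xfun_mult:
  assumes i: "1 \<le> i" "Suc i \<le> n" and g: "g \<in> Hn n" "star g (simple i) = g"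
  shows "ddiff n i (\<lambda>v. xfun n i v * g v) = g"
proof (rule ddiff_eqI)
  have g_comp: "g (v \<circ> simple i) = g v" for v
    using fun_cong[OF g(2), of v] by (simp add: star_simple)
  have "xfun n i v * g v - star (\<lambda>v. xfun n i v * g v) (simple i) v =
      (xfun n i v - xfun n (Suc i) v) * g v" for v
    using i g_comp[of v]
    by (cases "v \<in> Sn n") (simp_all add: star_simple xfun_def comp_simple_in_Sn_iff algebra_simps)
  then show "is_ddiff n i (\<lambda>v. xfun n i v * g v) g"
    using g(1) unfolding is_ddiff_def by blast
qed

theorem corollary2:
  fixes n i :: nat and C :: "(nat \<Rightarrow> nat) set"
  assumes "n \<ge> 1"
    and "1 \<le> i" and "i \<le> n - 1"
    and "C \<subseteq> transpositions n"
    and "simple i \<in> C"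
    and "(\<lambda>\<tau>. simple i \<circ> \<tau> \<circ> simple i) ` C = C"
  shows "(\<forall>f \<in> HC n C. ddiff n i f \<in> HC n C)
    \<and> {f \<in> HC n C. ddiff n i f = (\<lambda>v. 0)} = {f \<in> HC n C. star f (simple i) = f}
    \<and> ddiff n i ` HC n C = {f \<in> HC n C. star f (simple i) = f}"
proof -
  have i: "1 \<le> i" "Suc i \<le> n" using assms(1-3) by auto
  have fs: "f \<in> Htau n (simple i)" if "f \<in> HC n C" for f
    using that assms(5) by (simp add: HC_def)
  have conj: "simple i \<circ> \<tau> \<circ> simple i \<in> C" if "\<tau> \<in> C" for \<tau>
    using assms(6) that by blast
  have closed: "ddiff n i f \<in> HC n C" if "f \<in> HC n C" for f
    using ddiff_in_HC[OF i assms(4,5) conj that] .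
  have kernel: "{f \<in> HC n C. ddiff n i f = (\<lambda>v. 0)} = {f \<in> HC n C. star f (simple i) = f}"
    using ddiff_eq_0_iff[OF fs] by blast
  have image: "ddiff n i ` HC n C = {f \<in> HC n C. star f (simple i) = f}"
  proof
    show "ddiff n i ` HC n C \<subseteq> {f \<in> HC n C. star f (simple i) = f}"
      using closed star_ddiff_simple[OF i fs] by blast
    show "{f \<in> HC n C. star f (simple i) = f} \<subseteq> ddiff n i ` HC n C"
    proof
      fix g
      assume g: "g \<in> {f \<in> HC n C. star f (simple i) = f}"
      then have "g = ddiff n i (\<lambda>v. xfun n i v * g v)"
        using ddiff_xfun_mult[OF i] by (simp add: HC_def)
      moreover have "(\<lambda>v. xfun n i v * g v) \<in> HC n C"
        using HC_mult[OF assms(4) xfun_in_HC[OF assms(4)]] g i by simp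
      ultimately show "g \<in> ddiff n i ` HC n C" by (rule image_eqI)
    qed
  qed
  show ?thesis
    using closed kernel image by blast
qed

end
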